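(* Let $(X,\mathscr{R})$ be a reaction network with stoichiometric matrix $S$, and let $A\in\mathbb{N}_0^{\mathcal{A}\times X}$ be an sf-instance. Consider the statements, for $x,y\in X$: (i) $x$ and $y$ are obligatory isomers; (ii) $A_{ax}=A_{ay}$ for all $a\in\mathcal{A}$. If $\operatorname{im}A^\top=\ker S^\top$, then (i) and (ii) are equivalent. If $\operatorname{im}A^\top\subseteq\ker S^\top$, then (i) implies (ii).
   Context: A reaction network (RN) $(X,\mathscr{R})$ consists of a finite non-empty set $X$ of species and a finite non-empty set $\mathscr{R}$ of reactions. Each reaction $r$ is given by stoichiometric coefficients $s^-_{xr},s^+_{xr}\in\mathbb{N}_0$. The stoichiometric matrix $S\in\mathbb{Z}^{X\times\mathscr{R}}$ has entries $S_{xr}=s^+_{xr}-s^-_{xr}$. The paper assumes throughout that RNs are closed: every reaction $r$ has $x,y$ with $S_{xr}<0<S_{yr}$. An sf-instance is a matrix $A\in\mathbb{N}_0^{\mathcal{A}\times X}$, for some non-empty finite set $\mathcal{A}$, with every column nonzero and $AS=0$. Distinct $x,y\in X$ are obligatory isomers if there is $v\in\mathbb{Z}^{\mathscr{R}}$ with: - $-[Sv]_x=[Sv]_y=k$ for some positive integer $k$; - $[Sv]_z=0$ for all $z\in X\setminus\{x,y\}$. *)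

theory Defs
  imports Complex_Main
begin

text \<open>A reaction network with species type 's and reaction type 'r (both finite,
  hence non-empty), given by stoichiometric coefficients sm (= s^-) and sp (= s^+).\<close>

definition stoich :: "('s \<Rightarrow> 'r \<Rightarrow> nat) \<Rightarrow> ('s \<Rightarrow> 'r \<Rightarrow> nat) \<Rightarrow> 's \<Rightarrow> 'r \<Rightarrow> int" where
  "stoich sm sp x r = int (sp x r) - int (sm x r)"

definition closed_RN :: "('s \<Rightarrow> 'r \<Rightarrow> nat) \<Rightarrow> ('s \<Rightarrow> 'r \<Rightarrow> nat) \<Rightarrow> bool" where
  "closed_RN sm sp \<longleftrightarrow> (\<forall>r. \<exists>x y. stoich sm sp x r < 0 \<and> 0 < stoich sm sp y r)"

definition Smult :: "('s \<Rightarrow> 'r::finite \<Rightarrow> int) \<Rightarrow> ('r \<Rightarrow> int) \<Rightarrow> 's \<Rightarrow> int" where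
  "Smult S v x = (\<Sum>r\<in>UNIV. S x r * v r)"

definition sf_instance :: "('s::finite \<Rightarrow> 'r \<Rightarrow> int) \<Rightarrow> ('a \<Rightarrow> 's \<Rightarrow> nat) \<Rightarrow> bool" where
  "sf_instance S A \<longleftrightarrow> (\<forall>x. \<exists>a. A a x \<noteq> 0) \<and>
     (\<forall>a r. (\<Sum>x\<in>UNIV. int (A a x) * S x r) = 0)"

definition obligatory_isomers :: "('s \<Rightarrow> 'r::finite \<Rightarrow> int) \<Rightarrow> 's \<Rightarrow> 's \<Rightarrow> bool" where
  "obligatory_isomers S x y \<longleftrightarrow> x \<noteq> y \<and>
     (\<exists>v k. k > 0 \<and> - Smult S v x = k \<and> Smult S v y = k \<and>
        (\<forall>z. z \<noteq> x \<and> z \<noteq> y \<longrightarrow> Smult S v z = 0))"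

definition im_AT :: "('a::finite \<Rightarrow> 's \<Rightarrow> nat) \<Rightarrow> ('s \<Rightarrow> real) set" where
  "im_AT A = {w. \<exists>l::'a \<Rightarrow> real. \<forall>x. w x = (\<Sum>a\<in>UNIV. real (A a x) * l a)}"

definition ker_ST :: "('s::finite \<Rightarrow> 'r \<Rightarrow> int) \<Rightarrow> ('s \<Rightarrow> real) set" where
  "ker_ST S = {w. \<forall>r. (\<Sum>x\<in>UNIV. real_of_int (S x r) * w x) = 0}"

end

theory Submission
  imports Defs "HOL-Library.Function_Algebras"
begin

text \<open>
  (i) implies (ii): if \<open>S v = k (e\<^sub>y - e\<^sub>x)\<close> with \<open>k > 0\<close>, then
  \<open>0 = A S v = k (A e\<^sub>y - A e\<^sub>x)\<close>, so the columns \<open>x\<close> and \<open>y\<close> of \<open>A\<close> agree;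
  only \<open>A S = 0\<close> is needed.

  (ii) implies (i): if \<open>e\<^sub>y - e\<^sub>x\<close> were not in the column space of \<open>S\<close> over the
  rationals, the Fredholm alternative would give a rational \<open>w\<close> with \<open>w\<^sup>T S = 0\<close> and
  \<open>w\<^sub>y \<noteq> w\<^sub>x\<close>. But then \<open>w\<close> lies in \<open>ker S\<^sup>T \<subseteq> im A\<^sup>T\<close>, and equal columns
  of \<open>A\<close> force \<open>w\<^sub>x = w\<^sub>y\<close>. So \<open>S v = e\<^sub>y - e\<^sub>x\<close> has a rational solution, and
  clearing denominators gives an integer \<open>v\<close> with \<open>S v = d (e\<^sub>y - e\<^sub>x)\<close>, \<open>d > 0\<close>.
\<close>

definition scale_fun :: "'k::field \<Rightarrow> ('i \<Rightarrow> 'k) \<Rightarrow> 'i \<Rightarrow> 'k" where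
  "scale_fun c f = (\<lambda>i. c * f i)"

global_interpretation fun_vs: vector_space "scale_fun :: 'k::field \<Rightarrow> ('i \<Rightarrow> 'k) \<Rightarrow> 'i \<Rightarrow> 'k"
  by unfold_locales (auto simp: scale_fun_def fun_eq_iff algebra_simps)

global_interpretation vector_space_over_itself: vector_space "(*) :: 'k::field \<Rightarrow> 'k \<Rightarrow> 'k"
  by unfold_locales (auto simp: algebra_simps)

lemma (in vector_space) linear_functional_separating_subspace:
  assumes U: "subspace U" and b: "b \<notin> U"
  obtains g where "Vector_Spaces.linear scale (*) g" "g b = 1" "\<And>u. u \<in> U \<Longrightarrow> g u = 0"
proof -
  interpret vector_space_pair scale "(*) :: 'a \<Rightarrow> 'a \<Rightarrow> 'a" by unfold_locales
  obtain B where B: "B \<subseteq> U" "independent B" "U \<subseteq> span B"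
    using maximal_independent_subset by blast
  have span_B: "span B = U"
    using B span_minimal[OF B(1) U] by blast
  then have indep: "independent (insert b B)"
    using b B(2) by (simp add: independent_insertI)
  define g where "g = construct (insert b B) (\<lambda>u. if u = b then 1 else 0)"
  have lin: "Vector_Spaces.linear scale (*) g"
    unfolding g_def using indep by (rule linear_construct)
  have g_basis: "g u = (if u = b then 1 else 0)" if "u \<in> insert b B" for u
    unfolding g_def using indep that by (rule construct_basis)
  have "b \<notin> B"
    using b B(1) by blast
  then have "\<forall>u\<in>B. g u = 0"
    using g_basis by auto
  then have "g u = 0" if "u \<in> span B" for u
    using linear_eq_0_on_span[OF lin] that by blast
  with lin g_basis span_B show ?thesis
    using that by auto
qed

lemma sum_fun_apply: "(\<Sum>i\<in>A. f i) x = (\<Sum>i\<in>A. f i x)"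
  by (induction A rule: infinite_finite_induct) simp_all

lemma linear_functional_eq_sum:
  fixes g :: "('i::finite \<Rightarrow> 'k::field) \<Rightarrow> 'k"
  assumes lin: "Vector_Spaces.linear scale_fun (*) g"
  shows "g u = (\<Sum>i\<in>UNIV. u i * g (\<lambda>j. of_bool (j = i)))"
proof -
  interpret vector_space_pair "scale_fun :: 'k \<Rightarrow> ('i \<Rightarrow> 'k) \<Rightarrow> _" "(*) :: 'k \<Rightarrow> 'k \<Rightarrow> 'k"
    by unfold_locales
  have "u = (\<Sum>i\<in>UNIV. scale_fun (u i) (\<lambda>j. of_bool (j = i)))"
  proof
    fix j
    have "(\<Sum>i\<in>UNIV. scale_fun (u i) (\<lambda>j. of_bool (j = i))) j
        = (\<Sum>i\<in>UNIV. u i * of_bool (j = i))"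
      by (simp add: sum_fun_apply scale_fun_def)
    then show "u j = (\<Sum>i\<in>UNIV. scale_fun (u i) (\<lambda>j. of_bool (j = i))) j"
      by simp
  qed
  then have "g u = g (\<Sum>i\<in>UNIV. scale_fun (u i) (\<lambda>j. of_bool (j = i)))"
    by simp
  also have "\<dots> = (\<Sum>i\<in>UNIV. u i * g (\<lambda>j. of_bool (j = i)))"
    by (simp add: linear_sum[OF lin] linear_scale[OF lin])
  finally show ?thesis .
qed

definition mat_vec :: "('s \<Rightarrow> 'r::finite \<Rightarrow> 'k::comm_semiring_0) \<Rightarrow> ('r \<Rightarrow> 'k) \<Rightarrow> 's \<Rightarrow> 'k" where
  "mat_vec S v = (\<lambda>z. \<Sum>r\<in>UNIV. S z r * v r)"

lemma linear_mat_vec: "Vector_Spaces.linear scale_fun scale_fun (mat_vec (S :: 's \<Rightarrow> 'r::finite \<Rightarrow> 'k::field))"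
  unfolding Vector_Spaces.linear_iff
proof (intro conjI allI)
  show "mat_vec S (u + v) = mat_vec S u + mat_vec S v" for u v
    by (simp add: mat_vec_def fun_eq_iff distrib_left sum.distrib)
  show "mat_vec S (scale_fun c u) = scale_fun c (mat_vec S u)" for c u
  proof
    fix z
    have "(\<Sum>r\<in>UNIV. S z r * (c * u r)) = c * (\<Sum>r\<in>UNIV. S z r * u r)"
      unfolding sum_distrib_left by (rule sum.cong) (simp_all add: mult.left_commute)
    then show "mat_vec S (scale_fun c u) z = scale_fun c (mat_vec S u) z"
      by (simp only: mat_vec_def scale_fun_def)
  qed
qed (fact fun_vs.vector_space_axioms)+

lemma fredholm_alternative:
  fixes S :: "'s::finite \<Rightarrow> 'r::finite \<Rightarrow> 'k::field"
  assumes "b \<notin> range (mat_vec S)"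
  obtains w where "\<And>r. (\<Sum>x\<in>UNIV. w x * S x r) = 0" "(\<Sum>x\<in>UNIV. w x * b x) \<noteq> 0"
proof -
  interpret vector_space_pair "scale_fun :: 'k \<Rightarrow> ('r \<Rightarrow> 'k) \<Rightarrow> _" "scale_fun :: 'k \<Rightarrow> ('s \<Rightarrow> 'k) \<Rightarrow> _"
    by unfold_locales
  have "fun_vs.subspace (range (mat_vec S))"
    using linear_subspace_image[OF linear_mat_vec fun_vs.subspace_UNIV] .
  then obtain g where lin: "Vector_Spaces.linear scale_fun (*) g" and "g b = 1"
    and g_range: "\<And>u. u \<in> range (mat_vec S) \<Longrightarrow> g u = 0"
    using assms fun_vs.linear_functional_separating_subspace by metis
  define w where "w x = g (\<lambda>z. of_bool (z = x))" for x
  have g_eq: "g u = (\<Sum>x\<in>UNIV. w x * u x)" for u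
    unfolding w_def linear_functional_eq_sum[OF lin, of u] by (simp add: mult.commute)
  show ?thesis
  proof
    fix r
    have "(\<lambda>x. S x r) = mat_vec S (\<lambda>q. of_bool (q = r))"
      by (simp add: mat_vec_def)
    then show "(\<Sum>x\<in>UNIV. w x * S x r) = 0"
      using g_eq g_range by (metis rangeI)
  next
    show "(\<Sum>x\<in>UNIV. w x * b x) \<noteq> 0"
      using \<open>g b = 1\<close> g_eq by simp
  qed
qed

lemma rat_vector_common_denominator:
  fixes v :: "'r::finite \<Rightarrow> rat"
  obtains d :: int and n :: "'r \<Rightarrow> int" where "d > 0" "\<And>r. rat_of_int (n r) = rat_of_int d * v r"
proof -
  define d where "d = (\<Prod>r\<in>UNIV. snd (quotient_of (v r)))"
  have "d > 0"
    unfolding d_def by (simp add: prod_pos quotient_of_denom_pos')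
  have "\<exists>m. rat_of_int m = rat_of_int d * v r" for r
  proof -
    obtain p q where pq: "quotient_of (v r) = (p, q)"
      by fastforce
    have "q dvd d"
      unfolding d_def using dvd_prodI[of UNIV r "\<lambda>r. snd (quotient_of (v r))"] pq by simp
    then obtain m where m: "d = q * m" ..
    have "v r = of_int p / of_int q" "q > 0"
      using quotient_of_div[OF pq] quotient_of_denom_pos[OF pq] by simp_all
    then have "rat_of_int d * v r = of_int (m * p)"
      unfolding m by simp
    then show ?thesis
      by (intro exI[of _ "m * p"]) simp
  qed
  then obtain n where "\<And>r. rat_of_int (n r) = rat_of_int d * v r"
    by metis
  with \<open>d > 0\<close> show ?thesis
    using that by blast
qed

lemma rational_solution_imp_Smult_multiple:
  fixes S :: "'s \<Rightarrow> 'r::finite \<Rightarrow> int" and b :: "'s \<Rightarrow> int"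
  assumes "mat_vec (\<lambda>z r. rat_of_int (S z r)) v = (\<lambda>z. rat_of_int (b z))"
  obtains d vi where "d > 0" "Smult S vi = (\<lambda>z. d * b z)"
proof -
  obtain d vi where "d > 0" and vi: "\<And>r. rat_of_int (vi r) = rat_of_int d * v r"
    using rat_vector_common_denominator by blast
  have "Smult S vi z = d * b z" for z
  proof -
    have "rat_of_int (Smult S vi z) = (\<Sum>r\<in>UNIV. rat_of_int (S z r) * (rat_of_int d * v r))"
      by (simp add: Smult_def vi)
    also have "\<dots> = rat_of_int d * mat_vec (\<lambda>z r. rat_of_int (S z r)) v z"
      unfolding mat_vec_def sum_distrib_left by (rule sum.cong) (simp_all add: mult.left_commute)
    also have "\<dots> = rat_of_int (d * b z)"
      by (simp add: assms)
    finally show ?thesis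
      by (simp only: of_int_eq_iff)
  qed
  then have "Smult S vi = (\<lambda>z. d * b z)"
    by blast
  with \<open>d > 0\<close> show ?thesis
    using that by blast
qed

lemma obligatory_isomers_iff:
  "obligatory_isomers S x y \<longleftrightarrow>
     x \<noteq> y \<and> (\<exists>v k. k > 0 \<and> Smult S v = (\<lambda>z. k * (of_bool (z = y) - of_bool (z = x))))"
proof -
  have "(- Smult S v x = k \<and> Smult S v y = k \<and> (\<forall>z. z \<noteq> x \<and> z \<noteq> y \<longrightarrow> Smult S v z = 0))
      \<longleftrightarrow> Smult S v = (\<lambda>z. k * (of_bool (z = y) - of_bool (z = x)))" if "x \<noteq> y" for v k
  proof
    assume Sv: "- Smult S v x = k \<and> Smult S v y = k \<and> (\<forall>z. z \<noteq> x \<and> z \<noteq> y \<longrightarrow> Smult S v z = 0)"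
    show "Smult S v = (\<lambda>z. k * (of_bool (z = y) - of_bool (z = x)))"
    proof
      fix z
      consider "z = x" | "z = y" | "z \<noteq> x" "z \<noteq> y"
        by blast
      then show "Smult S v z = k * (of_bool (z = y) - of_bool (z = x))"
        using Sv that by cases auto
    qed
  qed (use that in simp)
  then show ?thesis
    unfolding obligatory_isomers_def by blast
qed

lemma sum_mult_Smult:
  "(\<Sum>z\<in>UNIV. c z * Smult S v z) = (\<Sum>r\<in>UNIV. (\<Sum>z\<in>UNIV. c z * S z r) * v r)"
  unfolding Smult_def sum_distrib_left sum_distrib_right mult.assoc by (rule sum.swap)

lemma obligatory_isomers_imp_eq_columns:
  assumes "sf_instance S A" and "obligatory_isomers S x y"
  shows "A a x = A a y"
proof -
  obtain v k where "x \<noteq> y" "k > 0" and Sv: "Smult S v = (\<lambda>z. k * (of_bool (z = y) - of_bool (z = x)))"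
    using assms(2) unfolding obligatory_isomers_iff by blast
  have "k * (int (A a y) - int (A a x))
      = (\<Sum>z\<in>UNIV. (if z = y then k * int (A a y) else 0) - (if z = x then k * int (A a x) else 0))"
    by (simp add: sum_subtractf right_diff_distrib)
  also have "\<dots> = (\<Sum>z\<in>UNIV. int (A a z) * Smult S v z)"
    using \<open>x \<noteq> y\<close> by (intro sum.cong) (auto simp: Sv)
  also have "\<dots> = 0"
    using assms(1) unfolding sum_mult_Smult sf_instance_def by simp
  finally show ?thesis
    using \<open>k > 0\<close> by simp
qed

lemma eq_columns_imp_obligatory_isomers:
  fixes S :: "'s::finite \<Rightarrow> 'r::finite \<Rightarrow> int" and A :: "'a::finite \<Rightarrow> 's \<Rightarrow> nat"
  assumes ker_im: "ker_ST S \<subseteq> im_AT A" and "x \<noteq> y" and eq_columns: "\<forall>a. A a x = A a y"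
  shows "obligatory_isomers S x y"
proof -
  define b :: "'s \<Rightarrow> int" where "b z = of_bool (z = y) - of_bool (z = x)" for z
  have "(\<lambda>z. rat_of_int (b z)) \<in> range (mat_vec (\<lambda>z r. rat_of_int (S z r)))"
  proof (rule ccontr)
    assume "\<not> ?thesis"
    then obtain w where w_ker: "\<And>r. (\<Sum>z\<in>UNIV. w z * rat_of_int (S z r)) = 0"
      and w_b: "(\<Sum>z\<in>UNIV. w z * rat_of_int (b z)) \<noteq> 0"
      by (rule fredholm_alternative) blast
    have "(\<Sum>z\<in>UNIV. real_of_int (S z r) * real_of_rat (w z))
        = real_of_rat (\<Sum>z\<in>UNIV. w z * rat_of_int (S z r))" for r
      by (simp add: of_rat_sum of_rat_mult mult.commute)
    then have "(\<lambda>z. real_of_rat (w z)) \<in> ker_ST S"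
      unfolding ker_ST_def using w_ker by simp
    then obtain l :: "'a \<Rightarrow> real" where "\<And>z. real_of_rat (w z) = (\<Sum>a\<in>UNIV. real (A a z) * l a)"
      using ker_im unfolding im_AT_def by blast
    then have "real_of_rat (w x) = real_of_rat (w y)"
      using eq_columns by simp
    then have "w x = w y"
      by simp
    moreover have "(\<Sum>z\<in>UNIV. w z * rat_of_int (b z)) = w y - w x"
      using \<open>x \<noteq> y\<close> by (simp add: b_def algebra_simps sum_subtractf)
    ultimately show False
      using w_b by simp
  qed
  then obtain v where "mat_vec (\<lambda>z r. rat_of_int (S z r)) v = (\<lambda>z. rat_of_int (b z))"
    by auto
  then obtain d vi where "d > 0" "Smult S vi = (\<lambda>z. d * b z)"
    by (rule rational_solution_imp_Smult_multiple)
  with \<open>x \<noteq> y\<close> show ?thesis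
    unfolding obligatory_isomers_iff b_def by blast
qed

theorem theorem7:
  fixes sm sp :: "'s::finite \<Rightarrow> 'r::finite \<Rightarrow> nat"
    and A :: "'a::finite \<Rightarrow> 's \<Rightarrow> nat"
  assumes "closed_RN sm sp"
    and "sf_instance (stoich sm sp) A"
  shows "(im_AT A = ker_ST (stoich sm sp) \<longrightarrow>
            (\<forall>x y. x \<noteq> y \<longrightarrow>
               (obligatory_isomers (stoich sm sp) x y \<longleftrightarrow> (\<forall>a. A a x = A a y))))
       \<and> (im_AT A \<subseteq> ker_ST (stoich sm sp) \<longrightarrow>
            (\<forall>x y. obligatory_isomers (stoich sm sp) x y \<longrightarrow> (\<forall>a. A a x = A a y)))"
proof -
  have necessary: "\<forall>a. A a x = A a y" if "obligatory_isomers (stoich sm sp) x y" for x y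
    using obligatory_isomers_imp_eq_columns[OF assms(2) that] by blast
  have sufficient: "obligatory_isomers (stoich sm sp) x y"
    if "ker_ST (stoich sm sp) \<subseteq> im_AT A" "x \<noteq> y" "\<forall>a. A a x = A a y" for x y
    using eq_columns_imp_obligatory_isomers[OF that] .
  show ?thesis
    using necessary sufficient[OF equalityD2] by blast
qed

end
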